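(* Let $d\ge1$, $p\ge1$, $\Sigma\in\mathbb{R}^{d\times d}$ positive definite, and let $\eta,\zeta$ be mutually absolutely continuous probability distributions on $\mathbb{R}^d$ with $\mathrm{SKL}(\zeta,\eta)<\infty$. If at least one of $\eta$, $\zeta$ is $(p,\Sigma)$-exponentially controlled, then $$W_{p,\Sigma}(\eta,\zeta) \le (3+d)\left[\mathrm{SKL}(\zeta,\eta)^{1/p} + \{\mathrm{SKL}(\zeta,\eta)/2\}^{1/(2p)}\right].$$
   Context: $\mathrm{KL}(\zeta\|\eta)=\int\log(d\zeta/d\eta)\,d\zeta$; the symmetrized KL divergence is $\mathrm{SKL}(\zeta,\eta) := \mathrm{KL}(\zeta\|\eta)+\mathrm{KL}(\eta\|\zeta)$. The $(p,\Sigma)$-Wasserstein distance is $W_{p,\Sigma}(\eta,\zeta) := \inf_{\omega}\left\{\int \|\Sigma^{-1/2}(\theta-\theta')\|_2^p\,\omega(d\theta,d\theta')\right\}^{1/p}$, infimum over couplings $\omega$ of $\eta$ and $\zeta$; it is symmetric in its arguments. A distribution $\eta$ on $\mathbb{R}^d$ is $(p,\Sigma)$-exponentially controlled if $\inf_{\theta'\in\mathbb{R}^d}\log\int e^{\|\Sigma^{-1/2}(\theta-\theta')\|_2^p}\,\eta(d\theta)\le d/2$. *)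

theory Defs
  imports "HOL-Probability.Probability"
begin

definition pos_def_mat :: "real^'n^'n \<Rightarrow> bool" where
  "pos_def_mat S \<longleftrightarrow> transpose S = S \<and> (\<forall>x. x \<noteq> 0 \<longrightarrow> x \<bullet> (S *v x) > 0)"

definition inv_sqrt_mat :: "real^'n^'n \<Rightarrow> real^'n^'n" where
  "inv_sqrt_mat S = (SOME A. pos_def_mat A \<and> A ** A = matrix_inv S)"

text \<open>KL(zeta || eta) = integral of log(d zeta / d eta) d zeta (natural logarithm).\<close>
definition KL :: "'a measure \<Rightarrow> 'a measure \<Rightarrow> real" where
  "KL \<zeta> \<eta> = KL_divergence (exp 1) \<eta> \<zeta>"

definition KL_finite :: "'a measure \<Rightarrow> 'a measure \<Rightarrow> bool" where
  "KL_finite \<zeta> \<eta> \<longleftrightarrow> integrable \<zeta> (entropy_density (exp 1) \<eta> \<zeta>)"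

definition SKL :: "'a measure \<Rightarrow> 'a measure \<Rightarrow> real" where
  "SKL \<zeta> \<eta> = KL \<zeta> \<eta> + KL \<eta> \<zeta>"

definition couplings :: "(real^'n) measure \<Rightarrow> (real^'n) measure \<Rightarrow> ((real^'n) \<times> (real^'n)) measure set" where
  "couplings \<eta> \<zeta> = {\<omega>. prob_space \<omega> \<and> sets \<omega> = sets (borel \<Otimes>\<^sub>M borel)
      \<and> distr \<omega> borel fst = \<eta> \<and> distr \<omega> borel snd = \<zeta>}"

definition wasserstein_pow :: "real \<Rightarrow> real^'n^'n \<Rightarrow> (real^'n) measure \<Rightarrow> (real^'n) measure \<Rightarrow> ennreal" where
  "wasserstein_pow p S \<eta> \<zeta> = (INF \<omega> \<in> couplings \<eta> \<zeta>.
      \<integral>\<^sup>+ z. ennreal (norm (inv_sqrt_mat S *v (fst z - snd z)) powr p) \<partial>\<omega>)"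

definition wasserstein :: "real \<Rightarrow> real^'n^'n \<Rightarrow> (real^'n) measure \<Rightarrow> (real^'n) measure \<Rightarrow> ennreal" where
  "wasserstein p S \<eta> \<zeta> = (if wasserstein_pow p S \<eta> \<zeta> = \<infinity> then \<infinity>
      else ennreal (enn2real (wasserstein_pow p S \<eta> \<zeta>) powr (1 / p)))"

text \<open>(p,Sigma)-exponential control: inf over theta' of log of the (possibly infinite)
  integral is at most d/2; written equivalently with exp applied to both sides.\<close>
definition exp_controlled :: "real \<Rightarrow> real^'n^'n \<Rightarrow> (real^'n) measure \<Rightarrow> bool" where
  "exp_controlled p S \<eta> \<longleftrightarrow>
     (INF \<theta>'. \<integral>\<^sup>+ \<theta>. ennreal (exp (norm (inv_sqrt_mat S *v (\<theta> - \<theta>')) powr p)) \<partial>\<eta>)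
       \<le> ennreal (exp (real CARD('n) / 2))"

end

theory Submission
  imports Defs
begin

text \<open>Let \<open>\<rho>\<close> be the exponentially controlled measure, write the other one as \<open>f \<rho>\<close>, and put
  \<open>g \<theta> = \<parallel>\<Sigma>^(-1/2) (\<theta> - \<theta>\<^sub>0)\<parallel>^p\<close> for a near-optimal centre \<open>\<theta>\<^sub>0\<close>. Keeping the common mass
  \<open>min 1 f\<close> on the diagonal and coupling the two excess parts independently gives a coupling of
  transport cost at most \<open>2^(p-1) \<integral> g \<bar>f - 1\<bar> d\<rho>\<close>. The pointwise inequality
  \<open>s \<bar>x - 1\<bar> \<le> (x - 1) ln x + s\<^sup>2/4 exp s\<close> with \<open>s = l g\<close> bounds \<open>l \<integral> g \<bar>f - 1\<bar> d\<rho>\<close> by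
  \<open>SKL + l\<^sup>2/4 \<integral> g\<^sup>2 exp (g / (3 + d)) d\<rho>\<close> for \<open>l \<le> 1 / (3 + d)\<close>, because
  \<open>\<integral> (f - 1) ln f d\<rho> = SKL\<close>. Exponential control bounds the last integral by \<open>(3 + d)\<^sup>2/2\<close>, and
  optimising over \<open>l\<close> gives \<open>\<integral> g \<bar>f - 1\<bar> d\<rho> \<le> (3 + d) (SKL + \<surd>(SKL/2))\<close>; taking \<open>p\<close>-th roots
  yields the theorem.\<close>

lemma mult_sub_le_quarter_square:
  fixes w s :: real
  shows "w * (s - w) \<le> s\<^sup>2 / 4"
proof -
  have "0 \<le> (s - 2 * w)\<^sup>2" by simp
  then show ?thesis by (simp add: power2_eq_square algebra_simps)
qed

lemma sub_one_mult_ln_nonneg: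
  fixes x :: real
  assumes "0 < x"
  shows "0 \<le> (x - 1) * ln x"
  using assms by (cases "x \<le> 1") (auto intro: mult_nonpos_nonpos mult_nonneg_nonneg)

lemma mult_abs_sub_one_le:
  fixes s x :: real
  assumes s: "0 \<le> s" and x: "0 < x"
  shows "s * \<bar>x - 1\<bar> \<le> (x - 1) * ln x + s\<^sup>2 / 4 * exp s"
proof (cases "1 \<le> x")
  case x1: True
  define w where "w = ln x"
  have w0: "0 \<le> w" and xw: "x = exp w" using x1 x by (simp_all add: w_def)
  show ?thesis
  proof (cases "s \<le> w")
    case True
    then have "s * (x - 1) \<le> w * (x - 1)" using x1 by (intro mult_right_mono) auto
    then show ?thesis using x1 by (simp add: w_def mult.commute add_increasing2)
  next
    case False
    have "x - 1 \<le> w * x"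
      using ln_le_minus_one[of "1 / x"] x by (simp add: ln_div w_def field_simps)
    then have "(x - 1) * (s - w) \<le> (w * x) * (s - w)" using False by (intro mult_right_mono) auto
    also have "\<dots> = w * (s - w) * exp w" using xw by simp
    also have "\<dots> \<le> w * (s - w) * exp s" using False w0 by (intro mult_left_mono) auto
    also have "\<dots> \<le> s\<^sup>2 / 4 * exp s" by (intro mult_right_mono mult_sub_le_quarter_square) auto
    finally show ?thesis using x1 by (simp add: w_def algebra_simps)
  qed
next
  case False
  define v where "v = 1 - x"
  have v: "0 < v" using False by (simp add: v_def)
  have "v \<le> - ln x" using ln_le_minus_one[OF x] by (simp add: v_def)
  then have "v * v \<le> v * (- ln x)" using v by (intro mult_left_mono) auto
  also have "\<dots> = (x - 1) * ln x" by (simp add: v_def algebra_simps)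
  finally have "v * v \<le> (x - 1) * ln x" .
  moreover have "v * (s - v) \<le> s\<^sup>2 / 4" by (rule mult_sub_le_quarter_square)
  moreover have "s\<^sup>2 / 4 * 1 \<le> s\<^sup>2 / 4 * exp s" using s by (intro mult_left_mono) auto
  moreover have "s * \<bar>x - 1\<bar> = v * (s - v) + v * v" using False by (simp add: v_def algebra_simps)
  ultimately show ?thesis by linarith
qed

lemma le_zero_of_le_small_multiples:
  fixes J K \<epsilon> :: real
  assumes "0 < \<epsilon>" "0 \<le> K" and le: "\<And>l. 0 < l \<Longrightarrow> l \<le> \<epsilon> \<Longrightarrow> J \<le> l * K"
  shows "J \<le> 0"
proof (rule ccontr)
  assume "\<not> J \<le> 0"
  then have J: "0 < J" by simp
  define l where "l = min \<epsilon> (J / (2 * (K + 1)))"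
  have l: "0 < l" "l \<le> \<epsilon>" using \<open>\<not> J \<le> 0\<close> assms(1,2) by (auto simp: l_def)
  have "J \<le> l * K" by (rule le[OF l])
  also have "\<dots> \<le> J / (2 * (K + 1)) * K" using \<open>0 \<le> K\<close> by (intro mult_right_mono) (auto simp: l_def)
  also have "\<dots> = J * (K / (2 * (K + 1)))" by simp
  also have "\<dots> < J" using mult_strict_left_mono[of "K / (2 * (K + 1))" 1 J] J \<open>0 \<le> K\<close> by simp
  finally show False by simp
qed

text \<open>Take \<open>l = \<surd>(8 S) / a\<close>, the minimiser of \<open>S / l + l a\<^sup>2/8\<close>; if it exceeds \<open>1 / a\<close>, the
  endpoint \<open>l = 1 / a\<close> costs at most \<open>a S\<close> extra.\<close>
lemma le_of_le_tradeoff: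
  fixes J S K a :: real
  assumes S: "0 \<le> S" and K: "0 \<le> K" "K \<le> a\<^sup>2 / 8" and a: "0 < a"
    and le: "\<And>l. 0 < l \<Longrightarrow> l \<le> 1 / a \<Longrightarrow> J \<le> S / l + l * K"
  shows "J \<le> a * (S + sqrt (S / 2))"
proof (cases "S = 0")
  case True
  then have "J \<le> 0" using le by (intro le_zero_of_le_small_multiples[of "1 / a" K]) (use a K in auto)
  then show ?thesis using True by simp
next
  case False
  define r where "r = sqrt S"
  have r: "0 < r" "r * r = S" using S False by (auto simp: r_def)
  define c where "c = 2 * sqrt 2 / a"
  have c0: "0 < c" using a by (simp add: c_def)
  have "c * K \<le> c * (a\<^sup>2 / 8)" using K c0 by (intro mult_left_mono) auto
  also have "\<dots> = a / (2 * sqrt 2)" using a by (simp add: c_def field_simps power2_eq_square)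
  finally have cK: "c * K \<le> a / (2 * sqrt 2)" .
  have inv_c: "1 / c = a / (2 * sqrt 2)" using a by (simp add: c_def)
  have half: "r * (a / (2 * sqrt 2)) = a / 2 * sqrt (S / 2)"
    by (simp add: r_def real_sqrt_divide field_simps)
  show ?thesis
  proof (cases "c * r \<le> 1 / a")
    case True
    have "J \<le> S / (c * r) + (c * r) * K" using le[of "c * r"] True c0 r by simp
    also have "\<dots> = r * (1 / c) + r * (c * K)" using r c0 by (simp add: field_simps)
    also have "\<dots> \<le> r * (a / (2 * sqrt 2)) + r * (a / (2 * sqrt 2))"
      using cK inv_c r by (intro add_mono mult_left_mono) auto
    also have "\<dots> \<le> a * (S + sqrt (S / 2))" using half a S by (simp add: algebra_simps)
    finally show ?thesis .
  next
    case False
    have "J \<le> S / (1 / a) + (1 / a) * K" using le[of "1 / a"] a by simp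
    also have "(1 / a) * K \<le> (c * r) * K" using False K by (intro mult_right_mono) auto
    also have "\<dots> = r * (c * K)" by simp
    also have "\<dots> \<le> r * (a / (2 * sqrt 2))" using cK r by (intro mult_left_mono) auto
    also have "\<dots> = a / 2 * sqrt (S / 2)" by (rule half)
    also have "\<dots> \<le> a * sqrt (S / 2)" using a S by simp
    finally show ?thesis by (simp add: distrib_left mult.commute)
  qed
qed

lemma square_le_exp_mult:
  fixes g b :: real
  assumes g: "0 \<le> g" and b: "0 < b"
  shows "g\<^sup>2 \<le> (2 / (b * exp 1))\<^sup>2 * exp (b * g)"
proof -
  have "b * g / 2 \<le> exp (b * g / 2 - 1)" using exp_ge_add_one_self[of "b * g / 2 - 1"] by simp
  also have "\<dots> = exp (b * g / 2) / exp 1" by (simp add: exp_diff)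
  finally have "g \<le> 2 / (b * exp 1) * exp (b * g / 2)" using b by (simp add: field_simps)
  then have "g\<^sup>2 \<le> (2 / (b * exp 1) * exp (b * g / 2))\<^sup>2" using g by (intro power_mono) auto
  also have "\<dots> = (2 / (b * exp 1))\<^sup>2 * exp (b * g)"
    by (simp add: power_mult_distrib power2_eq_square exp_add[symmetric])
  finally show ?thesis .
qed

lemma powr_add_le_two_powr:
  fixes s t p :: real
  assumes s: "0 \<le> s" and t: "0 \<le> t" and p: "1 \<le> p"
  shows "(s + t) powr p \<le> 2 powr (p - 1) * (s powr p + t powr p)"
proof (cases "s = 0 \<or> t = 0")
  case True
  have "1 \<le> 2 powr (p - 1)" using p by (intro ge_one_powr_ge_zero) auto
  then show ?thesis using True s t by (auto simp: mult_le_cancel_right1)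
next
  case False
  then have "((1 - 1/2) *\<^sub>R s + (1/2) *\<^sub>R t) powr p \<le> (1 - 1/2) * s powr p + (1/2) * t powr p"
    using convex_onD[OF powr_convex[OF p], of "1/2" s t] s t by simp
  then have mid: "((s + t) / 2) powr p \<le> (s powr p + t powr p) / 2" by (simp add: field_simps)
  have "s + t = 2 * ((s + t) / 2)" by simp
  then have "(s + t) powr p = 2 powr p * ((s + t) / 2) powr p"
    using powr_mult[of 2 "(s + t) / 2" p] s t by metis
  also have "\<dots> \<le> 2 powr p * ((s powr p + t powr p) / 2)" using mid by (intro mult_left_mono) auto
  also have "\<dots> = 2 powr (p - 1) * (s powr p + t powr p)" by (simp add: powr_diff)
  finally show ?thesis .
qed

lemma powr_add_le_add_powr:
  fixes x y q :: real
  assumes x: "0 \<le> x" and y: "0 \<le> y" and q: "0 < q" "q \<le> 1"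
  shows "(x + y) powr q \<le> x powr q + y powr q"
proof (cases "x + y = 0")
  case True
  then show ?thesis using x y by simp
next
  case False
  define t where "t = x / (x + y)"
  have t: "0 \<le> t" "t \<le> 1" using x y False by (auto simp: t_def)
  have xt: "x = (x + y) * t" and yt: "y = (x + y) * (1 - t)" using False by (auto simp: t_def field_simps)
  have le_powr: "u \<le> u powr q" if "0 \<le> u" "u \<le> 1" for u :: real
    using powr_mono'[of q 1 u] that q by (cases "u = 0") auto
  have "(x + y) powr q * 1 \<le> (x + y) powr q * (t powr q + (1 - t) powr q)"
    using le_powr[of t] le_powr[of "1 - t"] t by (intro mult_left_mono) auto
  also have "\<dots> = ((x + y) * t) powr q + ((x + y) * (1 - t)) powr q"
    using x y t by (simp add: powr_mult distrib_left)
  finally show ?thesis using xt yt by simp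
qed

lemma powr_inverse_le_of_le_two_powr:
  fixes p a S B :: real
  assumes p: "1 \<le> p" and a: "2 \<le> a" and S: "0 \<le> S"
    and B: "0 \<le> B" "B \<le> 2 powr (p - 1) * (a * (S + sqrt (S / 2)))"
  shows "B powr (1 / p) \<le> a * (S powr (1 / p) + (S / 2) powr (1 / (2 * p)))"
proof -
  have p0: "0 < p" using p by simp
  have "(2 powr (p - 1) * a) powr (1 / p) \<le> (a powr (p - 1) * a) powr (1 / p)"
    using a p by (intro powr_mono2 mult_right_mono) auto
  also have "\<dots> = (a powr p) powr (1 / p)" using a by (simp add: powr_diff)
  also have "\<dots> = a" using a p0 by (simp add: powr_powr)
  finally have front: "(2 powr (p - 1) * a) powr (1 / p) \<le> a" .
  have "B powr (1 / p) \<le> (2 powr (p - 1) * a * (S + sqrt (S / 2))) powr (1 / p)"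
    using B S p0 by (intro powr_mono2) (auto simp: mult.assoc)
  also have "\<dots> = (2 powr (p - 1) * a) powr (1 / p) * (S + sqrt (S / 2)) powr (1 / p)"
    using a S by (subst powr_mult) auto
  also have "\<dots> \<le> a * (S + sqrt (S / 2)) powr (1 / p)" using front by (intro mult_right_mono) auto
  also have "(S + sqrt (S / 2)) powr (1 / p) \<le> S powr (1 / p) + sqrt (S / 2) powr (1 / p)"
    using S p by (intro powr_add_le_add_powr) auto
  also have "sqrt (S / 2) powr (1 / p) = (S / 2) powr (1 / (2 * p))"
    using S by (simp add: powr_half_sqrt[symmetric] powr_powr)
  finally show ?thesis using a by (simp add: mult_left_mono)
qed

lemma nn_integral_le_affine_exp_bound:
  fixes h k :: "'a \<Rightarrow> real"
  assumes "prob_space M" and [measurable]: "k \<in> borel_measurable M"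
    and le: "\<And>x. h x \<le> C1 + C2 * exp (k x)" and C: "0 \<le> C1" "0 \<le> C2"
    and Z: "(\<integral>\<^sup>+x. ennreal (exp (k x)) \<partial>M) \<le> ennreal Z" and "0 \<le> Z"
  shows "(\<integral>\<^sup>+x. ennreal (h x) \<partial>M) \<le> ennreal (C1 + C2 * Z)"
proof -
  interpret prob_space M by fact
  have "(\<integral>\<^sup>+x. ennreal (h x) \<partial>M) \<le> (\<integral>\<^sup>+x. ennreal C1 + ennreal C2 * ennreal (exp (k x)) \<partial>M)"
    using le C by (intro nn_integral_mono)
      (simp add: ennreal_plus[symmetric] ennreal_mult[symmetric] ennreal_leI del: ennreal_plus)
  also have "\<dots> = ennreal C1 + ennreal C2 * (\<integral>\<^sup>+x. ennreal (exp (k x)) \<partial>M)"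
    by (subst nn_integral_add) (auto simp: nn_integral_cmult emeasure_space_1)
  also have "\<dots> \<le> ennreal C1 + ennreal C2 * ennreal Z"
    using Z by (intro add_mono mult_left_mono) auto
  also have "\<dots> = ennreal (C1 + C2 * Z)"
    using C \<open>0 \<le> Z\<close> by (simp add: ennreal_plus[symmetric] ennreal_mult[symmetric] del: ennreal_plus)
  finally show ?thesis .
qed

lemma nn_integral_square_exp_le_low_dim:
  fixes g :: "'a \<Rightarrow> real" and d :: nat
  assumes P: "prob_space M" and gm: "g \<in> borel_measurable M" and g0: "\<And>x. 0 \<le> g x"
    and d: "1 \<le> d" "d \<le> 4"
    and Z: "(\<integral>\<^sup>+x. ennreal (exp (g x)) \<partial>M) \<le> ennreal (11/10 * exp (real d / 2))"
  shows "(\<integral>\<^sup>+x. ennreal ((g x)\<^sup>2 * exp (g x / (3 + real d))) \<partial>M) \<le> ennreal ((3 + real d)\<^sup>2 / 2)"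
proof -
  define a where "a = 3 + real d"
  have a4: "4 \<le> a" using d by (simp add: a_def)
  define C where "C = (2 / (3/4 * exp (1::real)))\<^sup>2"
  have C0: "0 \<le> C" by (simp add: C_def)
  have pointwise: "(g x)\<^sup>2 * exp (g x / a) \<le> 0 + C * exp (g x)" for x
  proof -
    have "(g x)\<^sup>2 * exp (g x / a) \<le> C * exp (3/4 * g x) * exp (g x / a)"
      using square_le_exp_mult[OF g0[of x], of "3/4"] by (intro mult_right_mono) (auto simp: C_def)
    also have "\<dots> = C * exp ((3/4 + 1/a) * g x)" by (simp add: exp_add[symmetric] algebra_simps)
    also have "\<dots> \<le> C * exp (g x)"
    proof -
      have "(3/4 + 1/a) * g x \<le> 1 * g x" using a4 g0[of x] by (intro mult_right_mono) (auto simp: field_simps)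
      then show ?thesis using C0 by (intro mult_left_mono) auto
    qed
    finally show ?thesis by simp
  qed
  have "(\<integral>\<^sup>+x. ennreal ((g x)\<^sup>2 * exp (g x / a)) \<partial>M) \<le> ennreal (0 + C * (11/10 * exp (real d / 2)))"
    by (rule nn_integral_le_affine_exp_bound[OF P gm pointwise _ C0 Z]) auto
  also have "\<dots> \<le> ennreal (a\<^sup>2 / 2)"
  proof (intro ennreal_leI)
    have "C * (11/10 * exp (real d / 2)) \<le> C * (11/10 * exp 2)"
      using d C0 by (intro mult_left_mono) auto
    also have "\<dots> = 64 * 11 / 90 * (exp 2 / (exp 1)\<^sup>2)" by (simp add: C_def field_simps power2_eq_square)
    also have "\<dots> = 64 * 11 / 90" by (simp add: power2_eq_square flip: exp_add)
    also have "\<dots> \<le> a\<^sup>2 / 2" using power_mono[OF a4, of 2] by simp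
    finally show "0 + C * (11/10 * exp (real d / 2)) \<le> a\<^sup>2 / 2" by simp
  qed
  finally show ?thesis by (simp add: a_def)
qed

lemma exp_half_less: "exp (1/2 :: real) < 165/100"
proof -
  have "exp (1/2) * exp (1/2) = exp (1::real)" by (simp flip: exp_add)
  also have "\<dots> < 165/100 * (165/100)" using e_less_272 by simp
  finally have "(exp (1/2))\<^sup>2 < (165/100::real)\<^sup>2" by (simp add: power2_eq_square)
  then show ?thesis by (rule power_less_imp_less_base) auto
qed

lemma half_square_mult_exp_le:
  fixes d :: real
  assumes "0 \<le> d"
  shows "(d / 2)\<^sup>2 * exp (d / 2 / (3 + d)) * (11/10) \<le> (3 + d)\<^sup>2 / 2"
proof -
  have "exp (d / 2 / (3 + d)) \<le> exp (1/2)" using assms by (simp add: field_simps)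
  then have "exp (d / 2 / (3 + d)) \<le> 165/100" using exp_half_less by linarith
  then have "(d / 2)\<^sup>2 * exp (d / 2 / (3 + d)) * (11/10) \<le> (d / 2)\<^sup>2 * (165/100) * (11/10)"
    by (intro mult_right_mono mult_left_mono) auto
  also have "\<dots> \<le> (3 + d)\<^sup>2 / 2" using assms by (simp add: power2_eq_square field_simps)
  finally show ?thesis .
qed

text \<open>With \<open>L = d/2\<close> and \<open>b = 2/L\<close>, the bound \<open>g\<^sup>2 \<le> (L/e)\<^sup>2 exp (b g)\<close> reduces the integrand to
  a multiple of \<open>exp (\<theta> g)\<close> with \<open>\<theta> = b + 1/a \<le> 1\<close>, and convexity of \<open>exp\<close> between \<open>0\<close> and
  \<open>g - L\<close> turns this into an affine function of \<open>exp g\<close>.\<close>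
lemma nn_integral_square_exp_le_high_dim:
  fixes g :: "'a \<Rightarrow> real" and d :: nat
  assumes P: "prob_space M" and gm: "g \<in> borel_measurable M" and g0: "\<And>x. 0 \<le> g x"
    and d: "5 \<le> d"
    and Z: "(\<integral>\<^sup>+x. ennreal (exp (g x)) \<partial>M) \<le> ennreal (11/10 * exp (real d / 2))"
  shows "(\<integral>\<^sup>+x. ennreal ((g x)\<^sup>2 * exp (g x / (3 + real d))) \<partial>M) \<le> ennreal ((3 + real d)\<^sup>2 / 2)"
proof -
  define a where "a = 3 + real d"
  define L where "L = real d / 2"
  define b where "b = 2 / L"
  define \<theta> where "\<theta> = b + 1 / a"
  have L: "5/2 \<le> L" using d by (simp add: L_def)
  have \<theta>: "0 \<le> \<theta>" "\<theta> \<le> 1"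
  proof -
    have "b \<le> 4/5" "0 < b" using L by (auto simp: b_def field_simps)
    moreover have "1 / a \<le> 1/8" "0 < 1 / a" using d by (auto simp: a_def field_simps)
    ultimately show "0 \<le> \<theta>" "\<theta> \<le> 1" unfolding \<theta>_def by linarith+
  qed
  define C where "C = (2 / (b * exp (1::real)))\<^sup>2"
  have C: "C = (L / exp 1)\<^sup>2" using L by (simp add: C_def b_def field_simps)
  define C1 where "C1 = C * exp (\<theta> * L) * (1 - \<theta>)"
  define C2 where "C2 = C * exp (\<theta> * L) * \<theta> / exp L"
  have pointwise: "(g x)\<^sup>2 * exp (g x / a) \<le> C1 + C2 * exp (g x)" for x
  proof -
    have "(g x)\<^sup>2 * exp (g x / a) \<le> C * exp (b * g x) * exp (g x / a)"
      using square_le_exp_mult[OF g0[of x], of b] L by (intro mult_right_mono) (auto simp: C_def b_def)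
    also have "\<dots> = C * (exp (\<theta> * L) * exp ((1 - \<theta>) * 0 + \<theta> * (g x - L)))"
      by (simp add: \<theta>_def exp_add[symmetric] algebra_simps)
    also have "\<dots> \<le> C * (exp (\<theta> * L) * ((1 - \<theta>) * exp 0 + \<theta> * exp (g x - L)))"
      using convex_onD[OF exp_convex, of \<theta> 0 "g x - L"] \<theta> by (intro mult_left_mono) (auto simp: C_def)
    also have "\<dots> = C1 + C2 * exp (g x)" by (simp add: C1_def C2_def exp_diff field_simps)
    finally show ?thesis .
  qed
  have "(\<integral>\<^sup>+x. ennreal ((g x)\<^sup>2 * exp (g x / a)) \<partial>M) \<le> ennreal (C1 + C2 * (11/10 * exp (real d / 2)))"
    by (rule nn_integral_le_affine_exp_bound[OF P gm pointwise _ _ Z]) (use \<theta> in \<open>auto simp: C1_def C2_def C_def\<close>)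
  also have "\<dots> \<le> ennreal (a\<^sup>2 / 2)"
  proof (intro ennreal_leI)
    have "C1 + C2 * (11/10 * exp (real d / 2)) = C * exp (\<theta> * L) * (1 + \<theta> / 10)"
      by (simp add: C1_def C2_def L_def field_simps)
    also have "\<dots> \<le> C * exp (\<theta> * L) * (11/10)" using \<theta> by (intro mult_left_mono) (auto simp: C_def)
    also have "\<theta> * L = 2 + L / a" using L by (simp add: \<theta>_def b_def field_simps)
    also have "C * exp (2 + L / a) * (11/10) = L\<^sup>2 * exp (L / a) * (11/10)"
    proof -
      have "exp (2::real) = exp 1 * exp 1" by (simp flip: exp_add)
      then show ?thesis by (simp add: C exp_add power2_eq_square field_simps)
    qed
    also have "\<dots> \<le> a\<^sup>2 / 2" unfolding a_def L_def by (rule half_square_mult_exp_le) simp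
    finally show "C1 + C2 * (11/10 * exp (real d / 2)) \<le> a\<^sup>2 / 2" .
  qed
  finally show ?thesis by (simp add: a_def)
qed

lemma nn_integral_square_exp_le:
  fixes g :: "'a \<Rightarrow> real" and d :: nat
  assumes "prob_space M" and "g \<in> borel_measurable M" and "\<And>x. 0 \<le> g x" and "1 \<le> d"
    and "(\<integral>\<^sup>+x. ennreal (exp (g x)) \<partial>M) \<le> ennreal (11/10 * exp (real d / 2))"
  shows "(\<integral>\<^sup>+x. ennreal ((g x)\<^sup>2 * exp (g x / (3 + real d))) \<partial>M) \<le> ennreal ((3 + real d)\<^sup>2 / 2)"
  using assms nn_integral_square_exp_le_low_dim[of M g d] nn_integral_square_exp_le_high_dim[of M g d]
  by (cases "d \<le> 4") auto

lemma nn_integral_weighted_abs_sub_one_le_penalised: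
  fixes f g :: "'a \<Rightarrow> real" and a l S :: real
  assumes [measurable]: "f \<in> borel_measurable M" "g \<in> borel_measurable M"
    and f_pos: "AE x in M. 0 < f x" and g0: "\<And>x. 0 \<le> g x"
    and S: "(\<integral>\<^sup>+x. ennreal ((f x - 1) * ln (f x)) \<partial>M) = ennreal S"
    and l: "0 < l" "l \<le> 1 / a"
  shows "ennreal l * (\<integral>\<^sup>+x. ennreal (g x * \<bar>f x - 1\<bar>) \<partial>M)
    \<le> ennreal S + ennreal (l\<^sup>2 / 4) * (\<integral>\<^sup>+x. ennreal ((g x)\<^sup>2 * exp (g x / a)) \<partial>M)"
proof -
  have pointwise: "ennreal (l * (g x * \<bar>f x - 1\<bar>))
      \<le> ennreal ((f x - 1) * ln (f x)) + ennreal (l\<^sup>2 / 4) * ennreal ((g x)\<^sup>2 * exp (g x / a))"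
    if fx: "0 < f x" for x
  proof -
    have "exp (l * g x) \<le> exp (g x / a)"
      using mult_right_mono[OF l(2) g0[of x]] by simp
    then have "(l * g x)\<^sup>2 / 4 * exp (l * g x) \<le> (l * g x)\<^sup>2 / 4 * exp (g x / a)"
      by (intro mult_left_mono) auto
    also have "\<dots> = l\<^sup>2 / 4 * ((g x)\<^sup>2 * exp (g x / a))" by (simp add: power_mult_distrib)
    finally have "(l * g x)\<^sup>2 / 4 * exp (l * g x) \<le> l\<^sup>2 / 4 * ((g x)\<^sup>2 * exp (g x / a))" .
    then have "l * (g x * \<bar>f x - 1\<bar>) \<le> (f x - 1) * ln (f x) + l\<^sup>2 / 4 * ((g x)\<^sup>2 * exp (g x / a))"
      using mult_abs_sub_one_le[of "l * g x" "f x"] l g0[of x] fx by (simp add: mult.assoc)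
    then show ?thesis
      using sub_one_mult_ln_nonneg[OF fx] g0[of x]
      by (simp add: ennreal_plus[symmetric] ennreal_mult[symmetric] ennreal_leI del: ennreal_plus)
  qed
  have "ennreal l * (\<integral>\<^sup>+x. ennreal (g x * \<bar>f x - 1\<bar>) \<partial>M) = (\<integral>\<^sup>+x. ennreal (l * (g x * \<bar>f x - 1\<bar>)) \<partial>M)"
    using l g0 by (subst nn_integral_cmult[symmetric]) (auto simp: ennreal_mult)
  also have "\<dots> \<le> (\<integral>\<^sup>+x. ennreal ((f x - 1) * ln (f x)) + ennreal (l\<^sup>2 / 4) * ennreal ((g x)\<^sup>2 * exp (g x / a)) \<partial>M)"
    using f_pos by (intro nn_integral_mono_AE) (auto elim!: eventually_mono intro: pointwise)
  also have "\<dots> = ennreal S + ennreal (l\<^sup>2 / 4) * (\<integral>\<^sup>+x. ennreal ((g x)\<^sup>2 * exp (g x / a)) \<partial>M)"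
    by (subst nn_integral_add) (auto simp: S nn_integral_cmult)
  finally show ?thesis .
qed

lemma nn_integral_weighted_abs_sub_one_le:
  fixes f g :: "'a \<Rightarrow> real" and d :: nat and S :: real
  assumes P: "prob_space M" and fm: "f \<in> borel_measurable M" and gm: "g \<in> borel_measurable M"
    and f_pos: "AE x in M. 0 < f x" and g0: "\<And>x. 0 \<le> g x" and d: "1 \<le> d"
    and S: "(\<integral>\<^sup>+x. ennreal ((f x - 1) * ln (f x)) \<partial>M) = ennreal S" and S0: "0 \<le> S"
    and Z: "(\<integral>\<^sup>+x. ennreal (exp (g x)) \<partial>M) \<le> ennreal (11/10 * exp (real d / 2))"
  shows "(\<integral>\<^sup>+x. ennreal (g x * \<bar>f x - 1\<bar>) \<partial>M) \<le> ennreal ((3 + real d) * (S + sqrt (S / 2)))"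
proof -
  define a where "a = 3 + real d"
  have a0: "0 < a" by (simp add: a_def)
  have moment: "(\<integral>\<^sup>+x. ennreal ((g x)\<^sup>2 * exp (g x / a)) \<partial>M) \<le> ennreal (a\<^sup>2 / 2)"
    using nn_integral_square_exp_le[OF P gm g0 d Z] by (simp add: a_def)
  define J where "J = (\<integral>\<^sup>+x. ennreal (g x * \<bar>f x - 1\<bar>) \<partial>M)"
  have penalised: "ennreal l * J \<le> ennreal (S + l * (l * (a\<^sup>2 / 8)))" if l: "0 < l" "l \<le> 1 / a" for l
  proof -
    have "ennreal l * J \<le> ennreal S + ennreal (l\<^sup>2 / 4) * (\<integral>\<^sup>+x. ennreal ((g x)\<^sup>2 * exp (g x / a)) \<partial>M)"
      unfolding J_def by (rule nn_integral_weighted_abs_sub_one_le_penalised[OF fm gm f_pos g0 S l])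
    also have "\<dots> \<le> ennreal S + ennreal (l\<^sup>2 / 4) * ennreal (a\<^sup>2 / 2)"
      using moment by (intro add_left_mono mult_left_mono) auto
    also have "\<dots> = ennreal (S + l * (l * (a\<^sup>2 / 8)))"
      using S0 l by (simp add: power2_eq_square mult.assoc ennreal_plus[symmetric] ennreal_mult[symmetric] del: ennreal_plus)
    finally show ?thesis .
  qed
  have "J \<noteq> \<infinity>"
    using penalised[of "1 / a"] a0 by (auto simp: ennreal_mult_top top_unique)
  then obtain j where J: "J = ennreal j" and j0: "0 \<le> j"
    by (cases J) auto
  have "j \<le> a * (S + sqrt (S / 2))"
  proof (rule le_of_le_tradeoff[OF S0 _ _ a0])
    fix l :: real assume l: "0 < l" "l \<le> 1 / a"
    have "ennreal (l * j) \<le> ennreal (S + l * (l * (a\<^sup>2 / 8)))"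
      using penalised[OF l] l j0 by (simp add: J ennreal_mult del: ennreal_plus)
    then have "l * j \<le> S + l * (l * (a\<^sup>2 / 8))"
      using S0 l by (subst (asm) ennreal_le_iff) auto
    then show "j \<le> S / l + l * (a\<^sup>2 / 8)" using l by (simp add: field_simps)
  qed auto
  then show ?thesis by (simp add: J_def[symmetric] J a_def ennreal_leI)
qed

definition diag_or_pair :: "bool \<times> ('a \<times> 'a) \<Rightarrow> 'a \<times> 'a" where
  "diag_or_pair z = (if fst z then (fst (snd z), fst (snd z)) else snd z)"

definition diag_or_prod_weight ::
    "('a \<Rightarrow> ennreal) \<Rightarrow> ('a \<Rightarrow> ennreal) \<Rightarrow> ('a \<Rightarrow> ennreal) \<Rightarrow> bool \<times> ('a \<times> 'a) \<Rightarrow> ennreal" where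
  "diag_or_prod_weight m q1 q2 z =
     (if fst z then m (fst (snd z)) else q1 (fst (snd z)) * q2 (snd (snd z)))"

text \<open>The measure \<open>m(x) \<rho>(dx) \<delta>\<^sub>x(dy) + q\<^sub>1(x) q\<^sub>2(y) \<rho>(dx) \<rho>(dy)\<close>, written as the image of a
  density on \<open>bool \<times> \<rho> \<otimes> \<rho>\<close> whose boolean component selects the summand.\<close>
definition diag_prod_measure ::
    "'a measure \<Rightarrow> ('a \<Rightarrow> ennreal) \<Rightarrow> ('a \<Rightarrow> ennreal) \<Rightarrow> ('a \<Rightarrow> ennreal) \<Rightarrow> ('a::topological_space \<times> 'a) measure" where
  "diag_prod_measure \<rho> m q1 q2 =
     distr (density (count_space UNIV \<Otimes>\<^sub>M (\<rho> \<Otimes>\<^sub>M \<rho>)) (diag_or_prod_weight m q1 q2)) (borel \<Otimes>\<^sub>M borel)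
       diag_or_pair"

lemma sets_diag_prod_measure [simp]: "sets (diag_prod_measure \<rho> m q1 q2) = sets (borel \<Otimes>\<^sub>M borel)"
  by (simp add: diag_prod_measure_def)

lemma nn_integral_diag_prod_measure:
  fixes \<rho> :: "'a::topological_space measure"
  assumes P: "prob_space \<rho>" and [measurable_cong]: "sets \<rho> = sets (borel :: 'a measure)"
    and [measurable]: "m \<in> borel_measurable borel" "q1 \<in> borel_measurable borel" "q2 \<in> borel_measurable borel"
      "h \<in> borel_measurable (borel \<Otimes>\<^sub>M borel)"
  shows "(\<integral>\<^sup>+z. h z \<partial>diag_prod_measure \<rho> m q1 q2)
    = (\<integral>\<^sup>+x. m x * h (x, x) \<partial>\<rho>) + (\<integral>\<^sup>+x. \<integral>\<^sup>+y. q1 x * q2 y * h (x, y) \<partial>\<rho> \<partial>\<rho>)"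
proof -
  interpret \<rho>: prob_space \<rho> by fact
  interpret \<rho>\<rho>: pair_prob_space \<rho> \<rho> by unfold_locales
  have [measurable]: "diag_or_pair \<in> measurable (count_space UNIV \<Otimes>\<^sub>M (\<rho> \<Otimes>\<^sub>M \<rho>)) (borel \<Otimes>\<^sub>M borel)"
    "diag_or_prod_weight m q1 q2 \<in> borel_measurable (count_space UNIV \<Otimes>\<^sub>M (\<rho> \<Otimes>\<^sub>M \<rho>))"
    unfolding diag_or_pair_def[abs_def] diag_or_prod_weight_def[abs_def] by measurable
  have "(\<integral>\<^sup>+z. h z \<partial>diag_prod_measure \<rho> m q1 q2)
      = (\<integral>\<^sup>+b. \<integral>\<^sup>+w. diag_or_prod_weight m q1 q2 (b, w) * h (diag_or_pair (b, w)) \<partial>(\<rho> \<Otimes>\<^sub>M \<rho>) \<partial>count_space UNIV)"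
    unfolding diag_prod_measure_def
    by (simp add: nn_integral_distr nn_integral_density \<rho>\<rho>.nn_integral_fst[symmetric])
  also have "\<dots> = (\<integral>\<^sup>+w. m (fst w) * h (fst w, fst w) \<partial>(\<rho> \<Otimes>\<^sub>M \<rho>))
      + (\<integral>\<^sup>+w. q1 (fst w) * q2 (snd w) * h w \<partial>(\<rho> \<Otimes>\<^sub>M \<rho>))"
    by (simp add: nn_integral_count_space_finite UNIV_bool diag_or_pair_def diag_or_prod_weight_def add.commute)
  also have "\<dots> = (\<integral>\<^sup>+x. m x * h (x, x) \<partial>\<rho>) + (\<integral>\<^sup>+x. \<integral>\<^sup>+y. q1 x * q2 y * h (x, y) \<partial>\<rho> \<partial>\<rho>)"
    by (subst (1 2) \<rho>.nn_integral_fst[symmetric]) (auto simp: split_beta' \<rho>.emeasure_space_1)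
  finally show ?thesis .
qed

definition excess :: "('a \<Rightarrow> real) \<Rightarrow> ('a \<Rightarrow> real) \<Rightarrow> 'a \<Rightarrow> real" where
  "excess f1 f2 x = max 0 (f1 x - f2 x)"

lemma borel_measurable_excess [measurable]:
  assumes [measurable]: "f1 \<in> borel_measurable M" "f2 \<in> borel_measurable M"
  shows "excess f1 f2 \<in> borel_measurable M"
  unfolding excess_def[abs_def] by measurable

lemma excess_nonneg [simp]: "0 \<le> excess f1 f2 x"
  by (simp add: excess_def)

lemma min_add_excess: "f1 x = min (f1 x) (f2 x) + excess f1 f2 x"
  by (simp add: excess_def min_def)

lemma abs_diff_eq_excess_add_excess: "\<bar>f1 x - f2 x\<bar> = excess f1 f2 x + excess f2 f1 x"
  by (simp add: excess_def max_def)

text \<open>The common part \<open>min f\<^sub>1 f\<^sub>2\<close> stays on the diagonal and the two excess parts are coupled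
  independently. When the excess mass is \<open>0\<close>, division by zero makes the product part vanish.\<close>
definition maximal_coupling ::
    "'a measure \<Rightarrow> ('a \<Rightarrow> real) \<Rightarrow> ('a \<Rightarrow> real) \<Rightarrow> ('a::topological_space \<times> 'a) measure" where
  "maximal_coupling \<rho> f1 f2 = diag_prod_measure \<rho> (\<lambda>x. ennreal (min (f1 x) (f2 x)))
     (\<lambda>x. ennreal (excess f1 f2 x))
     (\<lambda>y. ennreal (excess f2 f1 y / enn2real (\<integral>\<^sup>+x. ennreal (excess f1 f2 x) \<partial>\<rho>)))"

context
  fixes \<rho> :: "'a::topological_space measure" and f1 f2 :: "'a \<Rightarrow> real"
  assumes prob: "prob_space \<rho>" and sets_\<rho> [measurable_cong]: "sets \<rho> = sets (borel :: 'a measure)"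
    and [measurable]: "f1 \<in> borel_measurable borel" "f2 \<in> borel_measurable borel"
    and nonneg: "\<And>x. 0 \<le> f1 x" "\<And>x. 0 \<le> f2 x"
    and prob_density: "prob_space (density \<rho> f1)" "prob_space (density \<rho> f2)"
begin

lemma ennreal_eq_min_add_excess:
  "ennreal (f1 x) = ennreal (min (f1 x) (f2 x)) + ennreal (excess f1 f2 x)"
  "ennreal (f2 x) = ennreal (min (f1 x) (f2 x)) + ennreal (excess f2 f1 x)"
  using min_add_excess[of f1 x f2] min_add_excess[of f2 x f1] nonneg[of x]
  by (auto simp: min.commute simp flip: ennreal_plus)

lemma nn_integral_min_add_excess:
  "(\<integral>\<^sup>+x. ennreal (min (f1 x) (f2 x)) \<partial>\<rho>) + (\<integral>\<^sup>+x. ennreal (excess f1 f2 x) \<partial>\<rho>) = 1"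
  "(\<integral>\<^sup>+x. ennreal (min (f1 x) (f2 x)) \<partial>\<rho>) + (\<integral>\<^sup>+x. ennreal (excess f2 f1 x) \<partial>\<rho>) = 1"
proof -
  have "(\<integral>\<^sup>+x. ennreal (f x) \<partial>\<rho>) = 1"
    if "prob_space (density \<rho> f)" and [measurable]: "f \<in> borel_measurable borel" for f
    using prob_space.emeasure_space_1[OF that(1)] sets_eq_imp_space_eq[OF sets_\<rho>]
    by (simp add: emeasure_density)
  then have "(\<integral>\<^sup>+x. ennreal (f1 x) \<partial>\<rho>) = 1" "(\<integral>\<^sup>+x. ennreal (f2 x) \<partial>\<rho>) = 1"
    using prob_density by auto
  then show
    "(\<integral>\<^sup>+x. ennreal (min (f1 x) (f2 x)) \<partial>\<rho>) + (\<integral>\<^sup>+x. ennreal (excess f1 f2 x) \<partial>\<rho>) = 1"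
    "(\<integral>\<^sup>+x. ennreal (min (f1 x) (f2 x)) \<partial>\<rho>) + (\<integral>\<^sup>+x. ennreal (excess f2 f1 x) \<partial>\<rho>) = 1"
    unfolding ennreal_eq_min_add_excess by (simp_all add: nn_integral_add)
qed

lemma nn_integral_excess_eq:
  defines "e \<equiv> enn2real (\<integral>\<^sup>+x. ennreal (excess f1 f2 x) \<partial>\<rho>)"
  shows "(\<integral>\<^sup>+x. ennreal (excess f1 f2 x) \<partial>\<rho>) = ennreal e"
    and "(\<integral>\<^sup>+x. ennreal (excess f2 f1 x) \<partial>\<rho>) = ennreal e"
proof -
  note mass = nn_integral_min_add_excess
  have "(\<integral>\<^sup>+x. ennreal (excess f1 f2 x) \<partial>\<rho>) \<noteq> \<infinity>" "(\<integral>\<^sup>+x. ennreal (min (f1 x) (f2 x)) \<partial>\<rho>) \<noteq> \<infinity>"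
    using mass(1) by (auto simp: top_add)
  moreover have "(\<integral>\<^sup>+x. ennreal (excess f2 f1 x) \<partial>\<rho>) = (\<integral>\<^sup>+x. ennreal (excess f1 f2 x) \<partial>\<rho>)"
    using mass calculation(2) by (metis ennreal_add_left_cancel)
  ultimately show "(\<integral>\<^sup>+x. ennreal (excess f1 f2 x) \<partial>\<rho>) = ennreal e"
    and "(\<integral>\<^sup>+x. ennreal (excess f2 f1 x) \<partial>\<rho>) = ennreal e"
    using mass by (auto simp: e_def ennreal_enn2real_if ennreal_add_left_cancel)
qed

lemma nn_integral_excess_product:
  assumes [measurable]: "h1 \<in> borel_measurable borel" "h2 \<in> borel_measurable borel"
  defines "e \<equiv> enn2real (\<integral>\<^sup>+x. ennreal (excess f1 f2 x) \<partial>\<rho>)"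
  shows "(\<integral>\<^sup>+x. \<integral>\<^sup>+y. ennreal (excess f1 f2 x) * ennreal (excess f2 f1 y / e) * (h1 x + h2 y) \<partial>\<rho> \<partial>\<rho>)
    = (\<integral>\<^sup>+x. ennreal (excess f1 f2 x) * h1 x \<partial>\<rho>) + (\<integral>\<^sup>+y. ennreal (excess f2 f1 y) * h2 y \<partial>\<rho>)"
proof (cases "e = 0")
  case True
  then have "AE x in \<rho>. excess f1 f2 x = 0" "AE x in \<rho>. excess f2 f1 x = 0"
    using nn_integral_excess_eq by (simp_all add: e_def nn_integral_0_iff_AE)
  then have "(\<integral>\<^sup>+x. ennreal (excess f1 f2 x) * h1 x \<partial>\<rho>) = 0" "(\<integral>\<^sup>+y. ennreal (excess f2 f1 y) * h2 y \<partial>\<rho>) = 0"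
    by (simp_all add: nn_integral_0_iff_AE eventually_mono)
  then show ?thesis using True by simp
next
  case False
  have e: "0 < e" using False by (simp add: e_def less_le)
  have scaled: "ennreal (excess f2 f1 y / e) = ennreal (1 / e) * ennreal (excess f2 f1 y)" for y
    using e by (simp add: excess_def ennreal_mult[symmetric] del: ennreal_max_0)
  have inv_e: "ennreal (1 / e) * ennreal e = 1" using e by (simp flip: ennreal_mult)
  have "(\<integral>\<^sup>+x. \<integral>\<^sup>+y. ennreal (excess f1 f2 x) * ennreal (excess f2 f1 y / e) * (h1 x + h2 y) \<partial>\<rho> \<partial>\<rho>)
      = (\<integral>\<^sup>+x. ennreal (1 / e) * (\<integral>\<^sup>+y. ennreal (excess f2 f1 y) \<partial>\<rho>) * (ennreal (excess f1 f2 x) * h1 x)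
          + ennreal (1 / e) * (\<integral>\<^sup>+y. ennreal (excess f2 f1 y) * h2 y \<partial>\<rho>) * ennreal (excess f1 f2 x) \<partial>\<rho>)"
    unfolding scaled
    by (intro nn_integral_cong)
      (simp add: distrib_left nn_integral_add nn_integral_cmult mult_ac flip: nn_integral_cmult)
  also have "\<dots> = ennreal (1 / e) * ennreal e * (\<integral>\<^sup>+x. ennreal (excess f1 f2 x) * h1 x \<partial>\<rho>)
      + ennreal (1 / e) * (\<integral>\<^sup>+y. ennreal (excess f2 f1 y) * h2 y \<partial>\<rho>) * ennreal e"
    by (simp add: nn_integral_add nn_integral_cmult nn_integral_excess_eq[folded e_def])
  also have "\<dots> = ennreal (1 / e) * ennreal e * (\<integral>\<^sup>+x. ennreal (excess f1 f2 x) * h1 x \<partial>\<rho>)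
      + ennreal (1 / e) * ennreal e * (\<integral>\<^sup>+y. ennreal (excess f2 f1 y) * h2 y \<partial>\<rho>)"
    by (simp only: ac_simps)
  also have "\<dots> = (\<integral>\<^sup>+x. ennreal (excess f1 f2 x) * h1 x \<partial>\<rho>) + (\<integral>\<^sup>+y. ennreal (excess f2 f1 y) * h2 y \<partial>\<rho>)"
    by (simp add: inv_e)
  finally show ?thesis .
qed

lemma nn_integral_maximal_coupling_separable:
  assumes [measurable]: "h1 \<in> borel_measurable borel" "h2 \<in> borel_measurable borel"
  shows "(\<integral>\<^sup>+z. h1 (fst z) + h2 (snd z) \<partial>maximal_coupling \<rho> f1 f2)
    = (\<integral>\<^sup>+x. ennreal (f1 x) * h1 x \<partial>\<rho>) + (\<integral>\<^sup>+x. ennreal (f2 x) * h2 x \<partial>\<rho>)"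
proof -
  have "(\<integral>\<^sup>+z. h1 (fst z) + h2 (snd z) \<partial>maximal_coupling \<rho> f1 f2)
      = (\<integral>\<^sup>+x. ennreal (min (f1 x) (f2 x)) * h1 x + ennreal (min (f1 x) (f2 x)) * h2 x \<partial>\<rho>)
        + ((\<integral>\<^sup>+x. ennreal (excess f1 f2 x) * h1 x \<partial>\<rho>) + (\<integral>\<^sup>+y. ennreal (excess f2 f1 y) * h2 y \<partial>\<rho>))"
    unfolding maximal_coupling_def
    by (subst nn_integral_diag_prod_measure[OF prob sets_\<rho>])
      (auto simp: distrib_left nn_integral_excess_product[symmetric])
  also have "\<dots> = (\<integral>\<^sup>+x. ennreal (f1 x) * h1 x \<partial>\<rho>) + (\<integral>\<^sup>+x. ennreal (f2 x) * h2 x \<partial>\<rho>)"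
    by (simp add: ennreal_eq_min_add_excess distrib_right nn_integral_add add_ac)
  finally show ?thesis .
qed

lemma distr_fst_maximal_coupling: "distr (maximal_coupling \<rho> f1 f2) borel fst = density \<rho> f1"
  and distr_snd_maximal_coupling: "distr (maximal_coupling \<rho> f1 f2) borel snd = density \<rho> f2"
proof -
  have [measurable]: "fst \<in> measurable (maximal_coupling \<rho> f1 f2) borel"
    "snd \<in> measurable (maximal_coupling \<rho> f1 f2) borel"
    by (simp_all add: maximal_coupling_def measurable_cong_sets[OF sets_diag_prod_measure refl])
  have "emeasure (distr (maximal_coupling \<rho> f1 f2) borel fst) A = emeasure (density \<rho> f1) A"
    and "emeasure (distr (maximal_coupling \<rho> f1 f2) borel snd) A = emeasure (density \<rho> f2) A"
    if [measurable]: "A \<in> sets borel" for A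
    using nn_integral_maximal_coupling_separable[of "indicator A" "\<lambda>_. 0"]
      nn_integral_maximal_coupling_separable[of "\<lambda>_. 0" "indicator A"]
    by (simp_all add: emeasure_distr nn_integral_distr emeasure_density nn_integral_density mult.commute
        flip: nn_integral_indicator)
  then show "distr (maximal_coupling \<rho> f1 f2) borel fst = density \<rho> f1"
    "distr (maximal_coupling \<rho> f1 f2) borel snd = density \<rho> f2"
    by (auto intro!: measure_eqI simp: sets_\<rho>)
qed

lemma prob_space_maximal_coupling: "prob_space (maximal_coupling \<rho> f1 f2)"
proof (rule prob_spaceI)
  have "fst \<in> measurable (maximal_coupling \<rho> f1 f2) borel"
    by (simp add: maximal_coupling_def measurable_cong_sets[OF sets_diag_prod_measure refl])
  then have "emeasure (maximal_coupling \<rho> f1 f2) (space (maximal_coupling \<rho> f1 f2))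
      = emeasure (density \<rho> f1) (space (density \<rho> f1))"
    by (simp add: emeasure_distr sets_eq_imp_space_eq[OF sets_\<rho>] maximal_coupling_def
        flip: distr_fst_maximal_coupling)
  then show "emeasure (maximal_coupling \<rho> f1 f2) (space (maximal_coupling \<rho> f1 f2)) = 1"
    using prob_space.emeasure_space_1[OF prob_density(1)] by simp
qed

lemma nn_integral_maximal_coupling_le:
  assumes c_meas: "case_prod c \<in> borel_measurable (borel \<Otimes>\<^sub>M borel)" and c_diag: "\<And>x. c x x = 0"
    and [measurable]: "g \<in> borel_measurable borel" and g0: "\<And>x. 0 \<le> g x" and K: "0 \<le> K"
    and c_le: "\<And>x y. c x y \<le> K * (g x + g y)"
  shows "(\<integral>\<^sup>+z. ennreal (c (fst z) (snd z)) \<partial>maximal_coupling \<rho> f1 f2)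
    \<le> ennreal K * (\<integral>\<^sup>+x. ennreal (g x * \<bar>f1 x - f2 x\<bar>) \<partial>\<rho>)"
proof -
  have [measurable]: "(\<lambda>z. ennreal (c (fst z) (snd z))) \<in> borel_measurable (borel \<Otimes>\<^sub>M borel)"
    using c_meas by (simp add: split_beta')
  define e where "e = enn2real (\<integral>\<^sup>+x. ennreal (excess f1 f2 x) \<partial>\<rho>)"
  have "(\<integral>\<^sup>+z. ennreal (c (fst z) (snd z)) \<partial>maximal_coupling \<rho> f1 f2)
      = (\<integral>\<^sup>+x. \<integral>\<^sup>+y. ennreal (excess f1 f2 x) * ennreal (excess f2 f1 y / e) * ennreal (c x y) \<partial>\<rho> \<partial>\<rho>)"
    unfolding maximal_coupling_def e_def
    by (subst nn_integral_diag_prod_measure[OF prob sets_\<rho>]) (auto simp: c_diag)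
  also have "\<dots> \<le> (\<integral>\<^sup>+x. \<integral>\<^sup>+y. ennreal (excess f1 f2 x) * ennreal (excess f2 f1 y / e)
      * (ennreal K * ennreal (g x) + ennreal K * ennreal (g y)) \<partial>\<rho> \<partial>\<rho>)"
    using c_le g0 K
    by (intro nn_integral_mono mult_left_mono)
      (auto simp: ennreal_leI distrib_left simp flip: ennreal_mult ennreal_plus)
  also have "\<dots> = (\<integral>\<^sup>+x. ennreal (excess f1 f2 x) * (ennreal K * ennreal (g x)) \<partial>\<rho>)
      + (\<integral>\<^sup>+x. ennreal (excess f2 f1 x) * (ennreal K * ennreal (g x)) \<partial>\<rho>)"
    unfolding e_def by (rule nn_integral_excess_product) auto
  also have "\<dots> = (\<integral>\<^sup>+x. ennreal K * ennreal (g x * \<bar>f1 x - f2 x\<bar>) \<partial>\<rho>)"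
    using g0 by (subst nn_integral_add[symmetric])
      (auto intro!: nn_integral_cong simp: abs_diff_eq_excess_add_excess ennreal_mult distrib_left mult_ac)
  also have "\<dots> = ennreal K * (\<integral>\<^sup>+x. ennreal (g x * \<bar>f1 x - f2 x\<bar>) \<partial>\<rho>)"
    by (simp add: nn_integral_cmult)
  finally show ?thesis .
qed

end

lemma density_enn2real_RN_deriv:
  assumes "prob_space \<rho>" "prob_space \<nu>" "sets \<nu> = sets \<rho>" "absolutely_continuous \<rho> \<nu>"
  shows "\<nu> = density \<rho> (\<lambda>x. enn2real (RN_deriv \<rho> \<nu> x))"
proof -
  interpret \<rho>: prob_space \<rho> by fact
  interpret \<nu>: prob_space \<nu> by fact
  have "AE x in \<rho>. RN_deriv \<rho> \<nu> x \<noteq> \<infinity>"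
    using \<rho>.RN_deriv_finite[OF \<nu>.sigma_finite_measure_axioms assms(4,3)] .
  then have "density \<rho> (\<lambda>x. enn2real (RN_deriv \<rho> \<nu> x)) = density \<rho> (RN_deriv \<rho> \<nu>)"
    by (intro density_cong) (auto elim!: eventually_mono simp: ennreal_enn2real_if)
  also have "\<dots> = \<nu>" using \<rho>.density_RN_deriv[OF assms(4,3)] .
  finally show ?thesis by simp
qed

lemma AE_density_pos:
  fixes f :: "'a \<Rightarrow> real"
  assumes [measurable]: "f \<in> borel_measurable \<rho>" and f0: "\<And>x. 0 \<le> f x"
    and \<nu>: "\<nu> = density \<rho> f" and ac: "absolutely_continuous \<nu> \<rho>"
  shows "AE x in \<rho>. 0 < f x"
proof -
  have [measurable]: "{x \<in> space \<rho>. f x = 0} \<in> sets \<rho>" by measurable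
  have "emeasure \<nu> {x \<in> space \<rho>. f x = 0} = (\<integral>\<^sup>+x. ennreal (f x) * indicator {x \<in> space \<rho>. f x = 0} x \<partial>\<rho>)"
    by (simp add: \<nu> emeasure_density)
  also have "\<dots> = 0" by (intro nn_integral_zero') (auto simp: indicator_def)
  finally have "{x \<in> space \<rho>. f x = 0} \<in> null_sets \<nu>" by (simp add: \<nu> null_sets_def)
  then have "{x \<in> space \<rho>. f x = 0} \<in> null_sets \<rho>" using ac by (auto simp: absolutely_continuous_def)
  then have "AE x in \<rho>. f x \<noteq> 0" by (auto dest!: AE_not_in elim!: eventually_rev_mp)
  then show ?thesis using f0 by (auto elim!: eventually_mono simp: less_le)
qed

lemma AE_RN_deriv_density_inverse:
  fixes f :: "'a \<Rightarrow> real"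
  assumes "prob_space \<nu>" and [measurable]: "f \<in> borel_measurable \<rho>" and f0: "\<And>x. 0 \<le> f x"
    and f_pos: "AE x in \<rho>. 0 < f x" and \<nu>: "\<nu> = density \<rho> f" and ac: "absolutely_continuous \<nu> \<rho>"
  shows "AE x in \<rho>. RN_deriv \<nu> \<rho> x = ennreal (1 / f x)"
proof -
  have sets: "sets \<nu> = sets \<rho>" by (simp add: \<nu>)
  have [measurable]: "(\<lambda>x. 1 / f x) \<in> borel_measurable \<nu>"
    by (subst measurable_cong_sets[OF sets refl]) measurable
  have "AE x in \<rho>. f x \<noteq> 0" using f_pos by eventually_elim simp
  then have "density \<nu> (\<lambda>x. 1 / f x) = density \<rho> (\<lambda>x. ennreal 1)"
    using f0 density_density_divide[of f \<rho> "\<lambda>_. 1"] by (simp add: \<nu>)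
  then have \<rho>: "\<rho> = density \<nu> (\<lambda>x. 1 / f x)" by (simp add: density_1)
  interpret \<nu>: prob_space \<nu> by fact
  have "density \<nu> (RN_deriv \<nu> \<rho>) = density \<nu> (\<lambda>x. 1 / f x)"
    unfolding \<rho> by (rule density_RN_deriv_density) measurable
  then have "AE x in \<nu>. RN_deriv \<nu> \<rho> x = ennreal (1 / f x)"
    by (intro \<nu>.density_unique) (auto simp flip: \<rho>)
  then show ?thesis using absolutely_continuous_AE[OF sets[symmetric] ac] by blast
qed

lemma nn_integral_sub_one_mult_ln_RN_deriv:
  assumes P\<rho>: "prob_space \<rho>" and P\<nu>: "prob_space \<nu>" and sets: "sets \<nu> = sets \<rho>"
    and ac: "absolutely_continuous \<rho> \<nu>" "absolutely_continuous \<nu> \<rho>"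
    and int: "integrable \<nu> (entropy_density (exp 1) \<rho> \<nu>)" "integrable \<rho> (entropy_density (exp 1) \<nu> \<rho>)"
  defines "f \<equiv> \<lambda>x. enn2real (RN_deriv \<rho> \<nu> x)"
  shows "(\<integral>\<^sup>+x. ennreal ((f x - 1) * ln (f x)) \<partial>\<rho>)
      = ennreal (KL_divergence (exp 1) \<rho> \<nu> + KL_divergence (exp 1) \<nu> \<rho>)"
    and "0 \<le> KL_divergence (exp 1) \<rho> \<nu> + KL_divergence (exp 1) \<nu> \<rho>"
proof -
  interpret \<rho>: prob_space \<rho> by fact
  have [measurable]: "f \<in> borel_measurable \<rho>" by (simp add: f_def)
  have f0: "\<And>x. 0 \<le> f x" by (simp add: f_def)
  have \<nu>: "\<nu> = density \<rho> f" unfolding f_def by (rule density_enn2real_RN_deriv[OF P\<rho> P\<nu> sets ac(1)])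
  have f_pos: "AE x in \<rho>. 0 < f x" by (rule AE_density_pos[OF _ f0 \<nu> ac(2)]) simp
  have log_e: "log (exp 1) = ln" by (simp add: log_def fun_eq_iff)
  have KL_fwd: "KL_divergence (exp 1) \<rho> \<nu> = (\<integral>x. f x * ln (f x) \<partial>\<rho>)"
    unfolding \<nu> using f0 by (subst \<rho>.KL_density) (auto simp: log_e)
  have "KL_divergence (exp 1) (density \<rho> f) (density \<rho> (\<lambda>x. ennreal 1)) = (\<integral>x. 1 * log (exp 1) (1 / f x) \<partial>\<rho>)"
    using f0 f_pos by (intro \<rho>.KL_density_density) (auto elim!: eventually_mono)
  then have KL_bwd: "KL_divergence (exp 1) \<nu> \<rho> = (\<integral>x. ln (1 / f x) \<partial>\<rho>)"
    by (simp add: log_e density_1 flip: \<nu>)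
  have "integrable (density \<rho> f) (entropy_density (exp 1) \<rho> \<nu>)" using int(1) by (simp flip: \<nu>)
  then have "integrable \<rho> (\<lambda>x. f x *\<^sub>R entropy_density (exp 1) \<rho> \<nu> x)"
    using f0 by (subst integrable_density[symmetric]) auto
  then have int_fwd: "integrable \<rho> (\<lambda>x. f x * ln (f x))"
    by (simp add: entropy_density_def f_def log_e)
  have "AE x in \<rho>. entropy_density (exp 1) \<nu> \<rho> x = ln (1 / f x)"
    using AE_RN_deriv_density_inverse[OF P\<nu> _ f0 f_pos \<nu> ac(2)] f0
    by (auto elim!: eventually_mono simp: entropy_density_def log_e)
  then have int_bwd: "integrable \<rho> (\<lambda>x. ln (1 / f x))"
    by (intro integrable_cong_AE_imp[OF int(2)]) auto
  have pointwise: "AE x in \<rho>. f x * ln (f x) + ln (1 / f x) = (f x - 1) * ln (f x)"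
    using f_pos by (auto elim!: eventually_mono simp: ln_div algebra_simps)
  have nonneg: "AE x in \<rho>. 0 \<le> f x * ln (f x) + ln (1 / f x)"
    using pointwise f_pos by eventually_elim (simp add: sub_one_mult_ln_nonneg)
  have "(\<integral>\<^sup>+x. ennreal ((f x - 1) * ln (f x)) \<partial>\<rho>) = (\<integral>\<^sup>+x. ennreal (f x * ln (f x) + ln (1 / f x)) \<partial>\<rho>)"
    using pointwise by (intro nn_integral_cong_AE) (auto elim!: eventually_mono)
  also have "\<dots> = ennreal (\<integral>x. f x * ln (f x) + ln (1 / f x) \<partial>\<rho>)"
    using int_fwd int_bwd nonneg by (intro nn_integral_eq_integral) auto
  finally show "(\<integral>\<^sup>+x. ennreal ((f x - 1) * ln (f x)) \<partial>\<rho>)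
      = ennreal (KL_divergence (exp 1) \<rho> \<nu> + KL_divergence (exp 1) \<nu> \<rho>)"
    using int_fwd int_bwd by (simp add: KL_fwd KL_bwd)
  show "0 \<le> KL_divergence (exp 1) \<rho> \<nu> + KL_divergence (exp 1) \<nu> \<rho>"
    using int_fwd int_bwd nonneg
    by (simp add: KL_fwd KL_bwd integral_nonneg_AE flip: Bochner_Integration.integral_add)
qed

lemma borel_measurable_matrix_vector_mult [measurable]:
  fixes A :: "real^'n^'m"
  assumes [measurable]: "h \<in> borel_measurable M"
  shows "(\<lambda>x. A *v h x) \<in> borel_measurable M"
proof -
  have "(\<lambda>x. A *v x) \<in> borel_measurable borel"
    by (intro borel_measurable_continuous_onI linear_continuous_on) auto
  then show ?thesis by (rule measurable_compose[rotated]) simp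
qed

lemma norm_matrix_vector_diff_powr_le:
  fixes A :: "real^'n^'m" and x y z :: "real^'n"
  assumes p: "1 \<le> p"
  shows "norm (A *v (x - y)) powr p
    \<le> 2 powr (p - 1) * (norm (A *v (x - z)) powr p + norm (A *v (y - z)) powr p)"
proof -
  have "A *v (x - y) = A *v (x - z) - A *v (y - z)"
    by (simp add: matrix_vector_mult_diff_distrib[symmetric])
  then have "norm (A *v (x - y)) \<le> norm (A *v (x - z)) + norm (A *v (y - z))"
    by (simp add: norm_triangle_ineq4)
  then have "norm (A *v (x - y)) powr p \<le> (norm (A *v (x - z)) + norm (A *v (y - z))) powr p"
    using p by (intro powr_mono2) auto
  also have "\<dots> \<le> 2 powr (p - 1) * (norm (A *v (x - z)) powr p + norm (A *v (y - z)) powr p)"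
    using p by (intro powr_add_le_two_powr) auto
  finally show ?thesis .
qed

lemma wasserstein_pow_density_le:
  fixes \<rho> :: "(real^'n) measure" and f1 f2 :: "real^'n \<Rightarrow> real" and x0 :: "real^'n"
  assumes coupling_assms: "prob_space \<rho>" "sets \<rho> = sets borel"
      "f1 \<in> borel_measurable borel" "f2 \<in> borel_measurable borel" "\<And>x. 0 \<le> f1 x" "\<And>x. 0 \<le> f2 x"
      "prob_space (density \<rho> f1)" "prob_space (density \<rho> f2)"
    and p: "1 \<le> p"
  shows "wasserstein_pow p \<Sigma> (density \<rho> f1) (density \<rho> f2)
    \<le> ennreal (2 powr (p - 1)) * (\<integral>\<^sup>+x. ennreal (norm (inv_sqrt_mat \<Sigma> *v (x - x0)) powr p * \<bar>f1 x - f2 x\<bar>) \<partial>\<rho>)"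
proof -
  define \<omega> where "\<omega> = maximal_coupling \<rho> f1 f2"
  have "\<omega> \<in> couplings (density \<rho> f1) (density \<rho> f2)"
    using prob_space_maximal_coupling[OF coupling_assms] distr_fst_maximal_coupling[OF coupling_assms]
      distr_snd_maximal_coupling[OF coupling_assms]
    by (simp add: \<omega>_def couplings_def maximal_coupling_def)
  then have "wasserstein_pow p \<Sigma> (density \<rho> f1) (density \<rho> f2)
      \<le> (\<integral>\<^sup>+z. ennreal (norm (inv_sqrt_mat \<Sigma> *v (fst z - snd z)) powr p) \<partial>\<omega>)"
    unfolding wasserstein_pow_def by (rule INF_lower)
  also have "\<dots> \<le> ennreal (2 powr (p - 1))
      * (\<integral>\<^sup>+x. ennreal (norm (inv_sqrt_mat \<Sigma> *v (x - x0)) powr p * \<bar>f1 x - f2 x\<bar>) \<partial>\<rho>)"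
    unfolding \<omega>_def
    by (rule nn_integral_maximal_coupling_le[OF coupling_assms,
          where c = "\<lambda>x y. norm (inv_sqrt_mat \<Sigma> *v (x - y)) powr p"])
      (use p in \<open>auto intro: norm_matrix_vector_diff_powr_le\<close>)
  finally show ?thesis .
qed

text \<open>The infimum in the exponential control need not be attained; any constant above \<open>1\<close>
  would do in place of \<open>11/10\<close>.\<close>
lemma exp_controlled_obtain_center:
  assumes "exp_controlled p \<Sigma> (\<rho> :: (real^'n) measure)"
  obtains x0 where "(\<integral>\<^sup>+\<theta>. ennreal (exp (norm (inv_sqrt_mat \<Sigma> *v (\<theta> - x0)) powr p)) \<partial>\<rho>)
    \<le> ennreal (11/10 * exp (real CARD('n) / 2))"
proof -
  have "ennreal (exp (real CARD('n) / 2)) < ennreal (11/10 * exp (real CARD('n) / 2))"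
    by (intro ennreal_lessI) auto
  with assms have "(INF \<theta>'. \<integral>\<^sup>+\<theta>. ennreal (exp (norm (inv_sqrt_mat \<Sigma> *v (\<theta> - \<theta>')) powr p)) \<partial>\<rho>)
      < ennreal (11/10 * exp (real CARD('n) / 2))"
    unfolding exp_controlled_def by (rule order.strict_trans1)
  then obtain x0 where "(\<integral>\<^sup>+\<theta>. ennreal (exp (norm (inv_sqrt_mat \<Sigma> *v (\<theta> - x0)) powr p)) \<partial>\<rho>)
      < ennreal (11/10 * exp (real CARD('n) / 2))"
    by (auto simp: INF_less_iff)
  then show ?thesis using that[of x0] by simp
qed

lemma wasserstein_pow_le_SKL:
  fixes \<rho> \<nu> :: "(real^'n) measure"
  assumes p: "1 \<le> p" and P\<rho>: "prob_space \<rho>" and S\<rho>: "sets \<rho> = sets borel"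
    and P\<nu>: "prob_space \<nu>" and S\<nu>: "sets \<nu> = sets borel"
    and ac: "absolutely_continuous \<rho> \<nu>" "absolutely_continuous \<nu> \<rho>"
    and fin: "KL_finite \<nu> \<rho>" "KL_finite \<rho> \<nu>" and ctrl: "exp_controlled p \<Sigma> \<rho>"
  defines "B \<equiv> 2 powr (p - 1) * ((3 + real CARD('n)) * (SKL \<nu> \<rho> + sqrt (SKL \<nu> \<rho> / 2)))"
  shows "wasserstein_pow p \<Sigma> \<rho> \<nu> \<le> ennreal B" "wasserstein_pow p \<Sigma> \<nu> \<rho> \<le> ennreal B"
    and "0 \<le> SKL \<nu> \<rho>"
proof -
  obtain x0 where Z: "(\<integral>\<^sup>+\<theta>. ennreal (exp (norm (inv_sqrt_mat \<Sigma> *v (\<theta> - x0)) powr p)) \<partial>\<rho>)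
      \<le> ennreal (11/10 * exp (real CARD('n) / 2))"
    using exp_controlled_obtain_center[OF ctrl] by blast
  define f where "f x = enn2real (RN_deriv \<rho> \<nu> x)" for x
  define g where "g x = norm (inv_sqrt_mat \<Sigma> *v (x - x0)) powr p" for x
  note S\<rho>[measurable_cong]
  have [measurable]: "f \<in> borel_measurable borel" "g \<in> borel_measurable borel"
    unfolding f_def[abs_def] g_def[abs_def] by measurable
  have f0: "\<And>x. 0 \<le> f x" by (simp add: f_def)
  have sets: "sets \<nu> = sets \<rho>" using S\<rho> S\<nu> by simp
  have \<nu>: "\<nu> = density \<rho> f" unfolding f_def by (rule density_enn2real_RN_deriv[OF P\<rho> P\<nu> sets ac(1)])
  have f_pos: "AE x in \<rho>. 0 < f x" by (rule AE_density_pos[OF _ f0 \<nu> ac(2)]) simp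
  have SKL: "SKL \<nu> \<rho> = KL_divergence (exp 1) \<rho> \<nu> + KL_divergence (exp 1) \<nu> \<rho>"
    by (simp add: SKL_def KL_def)
  note KL = nn_integral_sub_one_mult_ln_RN_deriv[OF P\<rho> P\<nu> sets ac fin[unfolded KL_finite_def],
      folded f_def SKL]
  show "0 \<le> SKL \<nu> \<rho>" by (fact KL(2))
  have d: "1 \<le> CARD('n)" by (simp add: Suc_le_eq)
  have "(\<integral>\<^sup>+x. ennreal (g x * \<bar>f x - 1\<bar>) \<partial>\<rho>)
      \<le> ennreal ((3 + real CARD('n)) * (SKL \<nu> \<rho> + sqrt (SKL \<nu> \<rho> / 2)))"
    by (rule nn_integral_weighted_abs_sub_one_le[OF P\<rho> _ _ f_pos _ d KL])
      (use Z in \<open>auto simp: g_def\<close>)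
  then have bound: "ennreal (2 powr (p - 1)) * (\<integral>\<^sup>+x. ennreal (g x * \<bar>f x - 1\<bar>) \<partial>\<rho>) \<le> ennreal B"
    using KL(2) by (auto simp: B_def ennreal_mult intro: mult_left_mono)
  have densities: "\<rho> = density \<rho> (\<lambda>_. 1)" "\<nu> = density \<rho> f" "prob_space (density \<rho> (\<lambda>_. 1))"
    using P\<rho> \<nu> by (simp_all add: density_1)
  show "wasserstein_pow p \<Sigma> \<rho> \<nu> \<le> ennreal B"
    using wasserstein_pow_density_le[of \<rho> "\<lambda>_. 1" f p \<Sigma> x0] P\<rho> S\<rho> P\<nu> f0 p bound densities
    by (simp add: g_def abs_minus_commute)
  show "wasserstein_pow p \<Sigma> \<nu> \<rho> \<le> ennreal B"
    using wasserstein_pow_density_le[of \<rho> f "\<lambda>_. 1" p \<Sigma> x0] P\<rho> S\<rho> P\<nu> f0 p bound densities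
    by (simp add: g_def)
qed

lemma wasserstein_le_of_wasserstein_pow_le:
  assumes p: "1 \<le> p" and a: "2 \<le> a" and S: "0 \<le> S"
    and W: "wasserstein_pow p \<Sigma> \<eta> \<zeta> \<le> ennreal (2 powr (p - 1) * (a * (S + sqrt (S / 2))))"
  shows "wasserstein p \<Sigma> \<eta> \<zeta> \<le> ennreal (a * (S powr (1 / p) + (S / 2) powr (1 / (2 * p))))"
proof -
  obtain w where w: "wasserstein_pow p \<Sigma> \<eta> \<zeta> = ennreal w" "0 \<le> w"
    using W by (cases "wasserstein_pow p \<Sigma> \<eta> \<zeta>" rule: ennreal_cases) (auto simp: top_unique)
  then have "w \<le> 2 powr (p - 1) * (a * (S + sqrt (S / 2)))"
    using W a S by (simp add: ennreal_le_iff)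
  then show ?thesis
    using powr_inverse_le_of_le_two_powr[OF p a S w(2)] w by (simp add: wasserstein_def ennreal_leI)
qed

theorem mainTheorem3:
  fixes p :: real and \<Sigma> :: "real^'n^'n" and \<eta> \<zeta> :: "(real^'n) measure"
  assumes "p \<ge> 1"
    and "pos_def_mat \<Sigma>"
    and "prob_space \<eta>" and "sets \<eta> = sets borel"
    and "prob_space \<zeta>" and "sets \<zeta> = sets borel"
    and "absolutely_continuous \<eta> \<zeta>" and "absolutely_continuous \<zeta> \<eta>"
    and "KL_finite \<zeta> \<eta>" and "KL_finite \<eta> \<zeta>"
    and "exp_controlled p \<Sigma> \<eta> \<or> exp_controlled p \<Sigma> \<zeta>"
  shows "wasserstein p \<Sigma> \<eta> \<zeta> \<le> ennreal ((3 + real CARD('n)) *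
           (SKL \<zeta> \<eta> powr (1 / p) + (SKL \<zeta> \<eta> / 2) powr (1 / (2 * p))))"
proof -
  have SKL_commute: "SKL \<eta> \<zeta> = SKL \<zeta> \<eta>" by (simp add: SKL_def)
  have "wasserstein_pow p \<Sigma> \<eta> \<zeta>
      \<le> ennreal (2 powr (p - 1) * ((3 + real CARD('n)) * (SKL \<zeta> \<eta> + sqrt (SKL \<zeta> \<eta> / 2))))
    \<and> 0 \<le> SKL \<zeta> \<eta>"
    using assms(11)
  proof
    assume "exp_controlled p \<Sigma> \<eta>"
    from wasserstein_pow_le_SKL[OF assms(1,3-10) this] show ?thesis by simp
  next
    assume "exp_controlled p \<Sigma> \<zeta>"
    from wasserstein_pow_le_SKL[OF assms(1,5,6,3,4,8,7,10,9) this] show ?thesis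
      by (simp add: SKL_commute)
  qed
  then show ?thesis using assms(1) by (intro wasserstein_le_of_wasserstein_pow_le) auto
qed

end
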